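(* Let $M\ge 0$, $k\ge 1$, $m\ge 0$ be integers. For $l\ge 0$ let $\mathcal{P}_l(k,m)$ be the set of partitions $(\lambda_1,\dots,\lambda_l)$ into exactly $l$ parts with $\lambda_l\ge k$ and $\lambda_i-\lambda_{i+1}\ge m$ for $1\le i\le l-1$ ($\mathcal{P}_0(k,m)$ contains only the empty partition), and let $\mathcal{P}_{\le M}(k,m)=\bigcup_{l=0}^M\mathcal{P}_l(k,m)$. For a partition $\pi=(\lambda_1,\dots,\lambda_l)$ with $l\ge1$ parts define $\omega_{k,m}(\pi):=(\lambda_l+1-k)\prod_{i=1}^{l-1}(\lambda_i-\lambda_{i+1}+1-m)$, and let $\omega_{k,m}$ of the empty partition be $1$. Then \[\sum_{\pi\in\mathcal{P}_{\le M}(k,m)}\omega_{k,m}(\pi)\,q^{|\pi|}=\sum_{i=0}^{M}\frac{q^{m\binom{i}{2}+ki}}{(q;q)_i^2}.\]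
   Context: A partition is a finite weakly decreasing sequence of positive integers; $|\pi|$ is the sum of its parts. $(a;q)_L=\prod_{n=0}^{L-1}(1-aq^n)$. *)

theory Defs
  imports "HOL-Computational_Algebra.Formal_Power_Series"
begin

definition is_partition :: "nat list \<Rightarrow> bool" where
  "is_partition p \<longleftrightarrow> sorted_wrt (\<ge>) p \<and> (\<forall>x\<in>set p. 0 < x)"

definition P_set :: "nat \<Rightarrow> nat \<Rightarrow> nat \<Rightarrow> nat list set" where
  "P_set l k m = {p. is_partition p \<and> length p = l \<and>
      (p \<noteq> [] \<longrightarrow> k \<le> last p) \<and>
      (\<forall>i. Suc i < length p \<longrightarrow> p ! Suc i + m \<le> p ! i)}"

definition P_le :: "nat \<Rightarrow> nat \<Rightarrow> nat \<Rightarrow> nat list set" where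
  "P_le M k m = (\<Union>l\<in>{0..M}. P_set l k m)"

definition omega :: "nat \<Rightarrow> nat \<Rightarrow> nat list \<Rightarrow> int" where
  "omega k m p = (if p = [] then 1 else
     (int (last p) + 1 - int k) *
     (\<Prod>i<length p - 1. int (p ! i) - int (p ! Suc i) + 1 - int m))"

definition qpoch :: "nat \<Rightarrow> 'a::comm_ring_1 fps" where
  "qpoch L = (\<Prod>n<L. 1 - fps_X ^ (n + 1))"

end

theory Submission
  imports Defs
begin

text \<open>Removing the smallest part c of a partition in P_{l+1}(k,m) and subtracting c from the
  other parts gives a bijection onto the pairs (c, mu) with c >= k and mu in P_l(m,m), under
  which |pi| = |mu| + (l+1) c and omega_{k,m}(pi) = (c+1-k) omega_{m,m}(mu). So the generating
  function G_l(k) of P_l(k,m) satisfies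
  G_{l+1}(k) = sum_{c>=k} (c+1-k) q^{(l+1)c} G_l(m) = q^{(l+1)k} G_l(m) / (1-q^{l+1})^2,
  and by induction G_l(k) = q^{m binom(l,2) + kl} / (q;q)_l^2.\<close>

definition gap_partitions :: "nat \<Rightarrow> nat \<Rightarrow> nat \<Rightarrow> nat list set" where
  "gap_partitions l k m =
     {p. length p = l \<and> (p \<noteq> [] \<longrightarrow> k \<le> last p) \<and> sorted_wrt (\<lambda>x y. y + m \<le> x) p}"

lemma gap_sorted_last_le:
  assumes "sorted_wrt (\<lambda>x y::nat. y + m \<le> x) p" "y \<in> set p"
  shows "last p \<le> y"
proof (cases p rule: rev_cases)
  case (snoc xs x)
  with assms show ?thesis by (auto simp: sorted_wrt_append)
qed (use assms in auto)

lemma P_set_eq_gap_partitions: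
  assumes "1 \<le> k"
  shows "P_set l k m = gap_partitions l k m"
proof -
  have transp_gap: "transp (\<lambda>x y::nat. y + m \<le> x)"
    by (auto simp: transp_def)
  have "is_partition p" if "sorted_wrt (\<lambda>x y. y + m \<le> x) p" "p \<noteq> [] \<longrightarrow> k \<le> last p" for p
  proof -
    have "sorted_wrt (\<ge>) p" by (rule sorted_wrt_mono_rel[OF _ that(1)]) auto
    moreover have "\<forall>x\<in>set p. 0 < x"
      using gap_sorted_last_le[OF that(1)] that(2) assms by fastforce
    ultimately show ?thesis by (simp add: is_partition_def)
  qed
  then show ?thesis
    unfolding P_set_def gap_partitions_def
    by (auto simp: sorted_wrt_iff_nth_Suc_transp[OF transp_gap])
qed

lemma finite_gap_partitions_size:
  "finite {p \<in> gap_partitions l k m. sum_list p = n}"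
proof (rule finite_subset)
  show "{p \<in> gap_partitions l k m. sum_list p = n} \<subseteq> {p. set p \<subseteq> {0..n} \<and> length p = l}"
    by (auto simp: gap_partitions_def member_le_sum_list)
  show "finite {p. set p \<subseteq> {0..n} \<and> length p = l}"
    by (rule finite_lists_length_eq) simp
qed

definition shift_append :: "nat \<Rightarrow> nat list \<Rightarrow> nat list" where
  "shift_append c \<mu> = map (\<lambda>x. x + c) \<mu> @ [c]"

lemma sum_list_shift_append: "sum_list (shift_append c \<mu>) = sum_list \<mu> + Suc (length \<mu>) * c"
  by (induction \<mu>) (auto simp: shift_append_def)

lemma omega_shift_append: "omega k m (shift_append c \<mu>) = (int c + 1 - int k) * omega m m \<mu>"
proof (cases "\<mu> = []")
  case True
  then show ?thesis by (simp add: omega_def shift_append_def)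
next
  case False
  then obtain l where l: "length \<mu> = Suc l" by (cases \<mu>) auto
  let ?p = "shift_append c \<mu>"
  let ?d = "\<lambda>i. int (?p ! i) - int (?p ! Suc i) + 1 - int m"
  have "(\<Prod>i<length ?p - 1. ?d i) = (\<Prod>i<l. ?d i) * ?d l"
    using l by (simp add: shift_append_def)
  also have "(\<Prod>i<l. ?d i) = (\<Prod>i<l. int (\<mu> ! i) - int (\<mu> ! Suc i) + 1 - int m)"
    by (rule prod.cong) (auto simp: nth_append l shift_append_def)
  also have "?d l = int (last \<mu>) + 1 - int m"
    using l False by (simp add: nth_append last_conv_nth shift_append_def)
  finally show ?thesis using False l by (simp add: omega_def shift_append_def)
qed

lemma shift_append_in_gap_partitions:
  assumes "\<mu> \<in> gap_partitions l m m" "k \<le> c"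
  shows "shift_append c \<mu> \<in> gap_partitions (Suc l) k m"
proof -
  have sorted: "sorted_wrt (\<lambda>x y. y + m \<le> x) \<mu>"
    and "length \<mu> = l" "\<mu> \<noteq> [] \<longrightarrow> m \<le> last \<mu>"
    using assms(1) by (auto simp: gap_partitions_def)
  moreover have "\<forall>y\<in>set \<mu>. m \<le> y"
    using gap_sorted_last_le[OF sorted] \<open>\<mu> \<noteq> [] \<longrightarrow> m \<le> last \<mu>\<close> by fastforce
  ultimately show ?thesis
    using assms(2)
    by (auto simp: gap_partitions_def shift_append_def sorted_wrt_append sorted_wrt_map)
qed

lemma gap_partitions_SucE:
  assumes "p \<in> gap_partitions (Suc l) k m"
  obtains c \<mu> where "k \<le> c" "\<mu> \<in> gap_partitions l m m" "p = shift_append c \<mu>"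
proof -
  obtain xs c where p: "p = xs @ [c]"
    using assms by (cases p rule: rev_cases) (auto simp: gap_partitions_def)
  define \<mu> where "\<mu> = map (\<lambda>x. x - c) xs"
  have "length xs = l" "k \<le> c" and sorted: "sorted_wrt (\<lambda>x y. y + m \<le> x) xs"
    and above_c: "\<forall>x\<in>set xs. c + m \<le> x"
    using assms by (auto simp: p gap_partitions_def sorted_wrt_append)
  have "sorted_wrt (\<lambda>x y. y + m \<le> x) \<mu>"
    unfolding \<mu>_def sorted_wrt_map
    by (rule sorted_wrt_mono_rel[OF _ sorted]) (use above_c in auto)
  moreover have "m \<le> last \<mu>" if "\<mu> \<noteq> []"
  proof -
    have "c + m \<le> last xs" using above_c that by (simp add: \<mu>_def)
    then show ?thesis using that by (simp add: \<mu>_def last_map)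
  qed
  ultimately have "\<mu> \<in> gap_partitions l m m"
    using \<open>length xs = l\<close> by (simp add: gap_partitions_def \<mu>_def)
  moreover have "map (\<lambda>x. x + c) \<mu> = xs"
    unfolding \<mu>_def map_map by (rule map_idI) (use above_c in auto)
  then have "p = shift_append c \<mu>"
    by (simp add: p shift_append_def)
  ultimately show thesis using that \<open>k \<le> c\<close> by blast
qed

lemma shift_append_eq_iff: "shift_append c \<mu> = shift_append c' \<mu>' \<longleftrightarrow> c = c' \<and> \<mu> = \<mu>'"
  by (auto simp: shift_append_def dest: map_injective[where f = "\<lambda>x. x + c'"])

lemma sum_omega_gap_partitions_Suc:
  "(\<Sum>p | p \<in> gap_partitions (Suc l) k m \<and> sum_list p = n. omega k m p)
   = (\<Sum>c | k \<le> c \<and> Suc l * c \<le> n. (int c + 1 - int k) *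
        (\<Sum>\<mu> | \<mu> \<in> gap_partitions l m m \<and> sum_list \<mu> = n - Suc l * c. omega m m \<mu>))"
  (is "(\<Sum>p\<in>?P. _) = (\<Sum>c\<in>?C. _ * sum _ (?T c))")
proof -
  let ?f = "\<lambda>(c, \<mu>). shift_append c \<mu>"
  have size: "sum_list (shift_append c \<mu>) = sum_list \<mu> + Suc l * c"
    if "\<mu> \<in> gap_partitions l m m" for c \<mu>
    using that by (simp add: sum_list_shift_append gap_partitions_def)
  have bij: "bij_betw ?f (Sigma ?C ?T) ?P"
    unfolding bij_betw_def
  proof
    show "inj_on ?f (Sigma ?C ?T)"
      by (auto simp: inj_on_def shift_append_eq_iff)
    show "?f ` Sigma ?C ?T = ?P"
    proof
      show "?f ` Sigma ?C ?T \<subseteq> ?P"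
        using shift_append_in_gap_partitions size by auto
      show "?P \<subseteq> ?f ` Sigma ?C ?T"
      proof
        fix p assume "p \<in> ?P"
        then obtain c \<mu> where "k \<le> c" "\<mu> \<in> gap_partitions l m m" "p = shift_append c \<mu>"
          by (auto elim: gap_partitions_SucE)
        with \<open>p \<in> ?P\<close> size show "p \<in> ?f ` Sigma ?C ?T"
          by (intro image_eqI[of _ _ "(c, \<mu>)"]) auto
      qed
    qed
  qed
  have "finite ?C" by (rule finite_subset[of _ "{..n}"]) auto
  have "(\<Sum>p\<in>?P. omega k m p) = (\<Sum>a\<in>Sigma ?C ?T. omega k m (?f a))"
    by (rule sum.reindex_bij_betw[OF bij, symmetric])
  also have "\<dots> = (\<Sum>(c, \<mu>)\<in>Sigma ?C ?T. (int c + 1 - int k) * omega m m \<mu>)"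
    by (rule sum.cong) (auto simp: omega_shift_append)
  also have "\<dots> = (\<Sum>c\<in>?C. (int c + 1 - int k) * (\<Sum>\<mu>\<in>?T c. omega m m \<mu>))"
    using \<open>finite ?C\<close> finite_gap_partitions_size
    by (simp add: sum.Sigma[symmetric] sum_distrib_left)
  finally show ?thesis .
qed

unbundle fps_syntax

lemma fps_mult_one_minus_X_power_nth:
  "(f * (1 - fps_X ^ r)) $ n = f $ n - (if n < r then 0 else f $ (n - r))"
  for f :: "'a::comm_ring_1 fps"
  by (simp add: right_diff_distrib fps_X_power_mult_right_nth)

definition geometric_fps :: "nat \<Rightarrow> 'a::comm_ring_1 fps" where
  "geometric_fps r = Abs_fps (\<lambda>n. if r dvd n then 1 else 0)"

text \<open>The series sum_{c>=k} (c+1-k) X^{rc} = X^{rk} / (1 - X^r)^2.\<close>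
definition shifted_sq_geometric :: "nat \<Rightarrow> nat \<Rightarrow> 'a::comm_ring_1 fps" where
  "shifted_sq_geometric r k =
     Abs_fps (\<lambda>n. if r dvd n \<and> r * k \<le> n then of_nat (n div r + 1 - k) else 0)"

lemma geometric_fps_mult_one_minus_X_power:
  assumes "0 < r"
  shows "geometric_fps r * (1 - fps_X ^ r) = (1 :: 'a::comm_ring_1 fps)"
proof (rule fps_ext)
  fix n
  show "(geometric_fps r * (1 - fps_X ^ r)) $ n = (1 :: 'a fps) $ n"
  proof (cases "n < r")
    case True
    then have "r dvd n \<longleftrightarrow> n = 0" by (auto dest: dvd_imp_le)
    with True show ?thesis by (simp add: fps_mult_one_minus_X_power_nth geometric_fps_def)
  next
    case False
    then have "r dvd (n - r) \<longleftrightarrow> r dvd n" by (simp add: dvd_minus_self)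
    with False assms show ?thesis by (simp add: fps_mult_one_minus_X_power_nth geometric_fps_def)
  qed
qed

lemma shifted_sq_geometric_0_mult_one_minus_X_power:
  assumes "0 < r"
  shows "shifted_sq_geometric r 0 * (1 - fps_X ^ r) = (geometric_fps r :: 'a::comm_ring_1 fps)"
proof (rule fps_ext)
  fix n
  show "(shifted_sq_geometric r 0 * (1 - fps_X ^ r)) $ n = (geometric_fps r :: 'a fps) $ n"
  proof (cases "n < r")
    case True
    then have "r dvd n \<longleftrightarrow> n = 0" by (auto dest: dvd_imp_le)
    with True show ?thesis
      by (simp add: fps_mult_one_minus_X_power_nth shifted_sq_geometric_def geometric_fps_def)
  next
    case False
    then have "r dvd (n - r) \<longleftrightarrow> r dvd n" "n div r = Suc ((n - r) div r)"
      using assms by (simp_all add: dvd_minus_self le_div_geq)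
    with False show ?thesis
      by (simp add: fps_mult_one_minus_X_power_nth shifted_sq_geometric_def geometric_fps_def)
  qed
qed

lemma shifted_sq_geometric_0_eq_inverse:
  assumes "0 < r"
  shows "shifted_sq_geometric r 0 = inverse ((1 - fps_X ^ r) ^ 2 :: 'a::field fps)"
proof -
  have "(1 - fps_X ^ r) ^ 2 * shifted_sq_geometric r 0
        = (shifted_sq_geometric r 0 * (1 - fps_X ^ r)) * (1 - fps_X ^ r :: 'a fps)"
    by (simp add: power2_eq_square mult_ac)
  also have "\<dots> = 1"
    using assms
    by (simp add: shifted_sq_geometric_0_mult_one_minus_X_power geometric_fps_mult_one_minus_X_power)
  finally show ?thesis by (rule fps_inverse_unique[symmetric])
qed

lemma shifted_sq_geometric_eq:
  assumes "0 < r"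
  shows "shifted_sq_geometric r k = fps_X ^ (r * k) * (shifted_sq_geometric r 0 :: 'a::comm_ring_1 fps)"
proof (rule fps_ext)
  fix n
  show "shifted_sq_geometric r k $ n = (fps_X ^ (r * k) * (shifted_sq_geometric r 0 :: 'a fps)) $ n"
  proof (cases "n < r * k")
    case True
    then show ?thesis by (simp add: fps_X_power_mult_nth shifted_sq_geometric_def)
  next
    case False
    then obtain d where d: "n = r * k + d" by (metis le_Suc_ex not_less)
    then have "r dvd n \<longleftrightarrow> r dvd d" "n div r = k + d div r"
      using assms by (simp_all add: dvd_add_right_iff)
    with False d show ?thesis by (simp add: fps_X_power_mult_nth shifted_sq_geometric_def)
  qed
qed

lemma shifted_sq_geometric_mult_nth:
  assumes "0 < r"
  shows "(shifted_sq_geometric r k * H) $ n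
       = (\<Sum>c | k \<le> c \<and> r * c \<le> n. of_nat (c + 1 - k) * H $ (n - r * c))"
  (is "_ = (\<Sum>c\<in>?C. _)")
proof -
  let ?E = "shifted_sq_geometric r k"
  have "inj_on ((*) r) ?C" using assms by (auto simp: inj_on_def)
  have "(\<Sum>c\<in>?C. of_nat (c + 1 - k) * H $ (n - r * c)) = (\<Sum>c\<in>?C. ?E $ (r * c) * H $ (n - r * c))"
    by (rule sum.cong) (use assms in \<open>auto simp: shifted_sq_geometric_def\<close>)
  also have "\<dots> = (\<Sum>i\<in>(*) r ` ?C. ?E $ i * H $ (n - i))"
    by (simp add: sum.reindex[OF \<open>inj_on ((*) r) ?C\<close>])
  also have "\<dots> = (\<Sum>i=0..n. ?E $ i * H $ (n - i))"
  proof (rule sum.mono_neutral_left)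
    show "\<forall>i\<in>{0..n} - (*) r ` ?C. ?E $ i * H $ (n - i) = 0"
      using assms by (auto simp: shifted_sq_geometric_def elim!: dvdE)
  qed auto
  finally show ?thesis by (simp add: fps_mult_nth)
qed

definition gap_gf :: "nat \<Rightarrow> nat \<Rightarrow> nat \<Rightarrow> rat fps" where
  "gap_gf l k m =
     Abs_fps (\<lambda>n. of_int (\<Sum>p | p \<in> gap_partitions l k m \<and> sum_list p = n. omega k m p))"

lemma gap_gf_0: "gap_gf 0 k m = 1"
proof (rule fps_ext)
  fix n
  have "{p. p \<in> gap_partitions 0 k m \<and> sum_list p = n} = (if n = 0 then {[]} else {})"
    by (auto simp: gap_partitions_def)
  then show "gap_gf 0 k m $ n = 1 $ n"
    by (simp add: gap_gf_def omega_def)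
qed

lemma gap_gf_Suc: "gap_gf (Suc l) k m = shifted_sq_geometric (Suc l) k * gap_gf l m m"
proof (rule fps_ext)
  fix n
  have "gap_gf (Suc l) k m $ n
      = (\<Sum>c | k \<le> c \<and> Suc l * c \<le> n. of_int (int c + 1 - int k) * gap_gf l m m $ (n - Suc l * c))"
    by (simp add: gap_gf_def sum_omega_gap_partitions_Suc)
  also have "\<dots> = (\<Sum>c | k \<le> c \<and> Suc l * c \<le> n. of_nat (c + 1 - k) * gap_gf l m m $ (n - Suc l * c))"
    by (rule sum.cong) auto
  also have "\<dots> = (shifted_sq_geometric (Suc l) k * gap_gf l m m) $ n"
    by (simp add: shifted_sq_geometric_mult_nth)
  finally show "gap_gf (Suc l) k m $ n = (shifted_sq_geometric (Suc l) k * gap_gf l m m) $ n" .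
qed

lemma gap_gf_eq:
  "gap_gf l k m = fps_X ^ (m * (l choose 2) + k * l) * inverse (qpoch l ^ 2)"
proof (induction l arbitrary: k)
  case 0
  then show ?case by (simp add: gap_gf_0 qpoch_def binomial_eq_0)
next
  case (Suc l)
  let ?A = "inverse ((1 - fps_X ^ Suc l) ^ 2) :: rat fps" and ?B = "inverse (qpoch l ^ 2) :: rat fps"
  have "gap_gf (Suc l) k m = (fps_X ^ (Suc l * k) * ?A) * (fps_X ^ (m * (l choose 2) + m * l) * ?B)"
    by (simp only: gap_gf_Suc Suc.IH shifted_sq_geometric_eq[OF zero_less_Suc, of l k]
        shifted_sq_geometric_0_eq_inverse[OF zero_less_Suc])
  also have "\<dots> = fps_X ^ (Suc l * k + (m * (l choose 2) + m * l)) * (?B * ?A)"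
    by (simp only: power_add mult_ac)
  also have "?B * ?A = inverse (qpoch (Suc l) ^ 2)"
    by (simp add: qpoch_def power_mult_distrib fps_inverse_mult)
  also have "Suc l * k + (m * (l choose 2) + m * l) = m * (Suc l choose 2) + k * Suc l"
    by (simp add: numeral_2_eq_2 algebra_simps)
  finally show ?case .
qed

lemma sum_omega_P_le:
  assumes "1 \<le> k"
  shows "(\<Sum>p | p \<in> P_le M k m \<and> sum_list p = n. omega k m p)
       = (\<Sum>l=0..M. \<Sum>p | p \<in> gap_partitions l k m \<and> sum_list p = n. omega k m p)"
proof -
  let ?F = "\<lambda>l. {p. p \<in> gap_partitions l k m \<and> sum_list p = n}"
  have "{p. p \<in> P_le M k m \<and> sum_list p = n} = (\<Union>l\<in>{0..M}. ?F l)"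
    by (auto simp: P_le_def P_set_eq_gap_partitions[OF assms])
  moreover have "?F i \<inter> ?F j = {}" if "i \<noteq> j" for i j
    using that by (auto simp: gap_partitions_def)
  ultimately show ?thesis
    by (simp add: sum.UNION_disjoint finite_gap_partitions_size)
qed

theorem corollary6:
  fixes M k m :: nat
  assumes "k \<ge> 1"
  shows "Abs_fps (\<lambda>n. of_int (\<Sum>p\<in>{p\<in>P_le M k m. sum_list p = n}. omega k m p))
       = (\<Sum>i=0..M. fps_X ^ (m * (i choose 2) + k * i) * inverse ((qpoch i :: rat fps) ^ 2))"
proof (rule fps_ext)
  fix n
  show "Abs_fps (\<lambda>n. of_int (\<Sum>p\<in>{p\<in>P_le M k m. sum_list p = n}. omega k m p)) $ n
      = (\<Sum>i=0..M. fps_X ^ (m * (i choose 2) + k * i) * inverse ((qpoch i :: rat fps) ^ 2)) $ n"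
    by (simp add: sum_omega_P_le[OF assms] gap_gf_eq[symmetric] gap_gf_def fps_sum_nth)
qed

end
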